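(* Let $X=\{x_1,\ldots,x_n\}$ be a set of quantum variables, $q=p_{22}$, and let $\Omega:\mathbf{k}\langle X\rangle\to Sh(W)$ be the algebra homomorphism with $\Omega(x_i)=(x_i)$. Let $m\ge 0$. If $[k]_q\neq0$ and $p_{12}p_{21}\neq q^{1-k}$ for all $1\le k\le m$, then, with $$\{x_1x_2^m\}=\frac{[x_1x_2^m]}{[m]_q!\prod_{s=0}^{m-1}(1-p_{12}p_{21}q^s)},\qquad \{x_2^mx_1\}=\frac{[x_2^mx_1]}{[m]_q!\prod_{s=0}^{m-1}(1-p_{12}p_{21}q^s)},$$ one has $$\Omega(\{x_1x_2^m\})=p_{21}^{-m}q^{\frac{m(1-m)}{2}}(x_2^mx_1),\qquad \Omega(\{x_2^mx_1\})=p_{12}^{-m}q^{\frac{m(1-m)}{2}}(x_1x_2^m).$$ Otherwise $\Omega([x_1x_2^m])=\Omega([x_2^mx_1])=0$.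
   Context: Quantum variables: each $x_i$ is associated with an element $g_i$ of an abelian group $G$ and a character $\chi^i:G\to\mathbf{k}^*$; $p_{ij}=\chi^i(g_j)$, and for words $u,v$, $p(u,v)$ is the bimultiplicative extension. Skew bracket in $\mathbf{k}\langle X\rangle$ for homogeneous $u,v$: $[u,v]=uv-p(u,v)vu$; $[x_1x_2^m]=[\ldots[[x_1,x_2],x_2],\ldots,x_2]$ and $[x_2^mx_1]=[x_2,[x_2,\ldots,[x_2,x_1]\ldots]]$ ($m$ copies of $x_2$). $Sh(W)$ is the tensor space of $W=\mathrm{span}(X)$ with basis the comonomials $(z_1\cdots z_m)$, $z_i\in X$, and the quantum shuffle product: $(u)(v)$ is the sum over all shuffles of the letters of $u$ and $v$ of the resulting comonomial weighted by the product of $p(b,a)^{-1}$ over all pairs with $a$ a letter of $u$, $b$ a letter of $v$, and $b$ placed before $a$. In particular $(w)(x_i)=\sum_{uv=w}p(x_i,v)^{-1}(ux_iv)$ and $(x_i)(w)=\sum_{uv=w}p(u,x_i)^{-1}(ux_iv)$. $[m]_q=1+q+\cdots+q^{m-1}$, $[m]_q!=\prod_{k=1}^m[k]_q$. *)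

theory Defs
  imports Main
begin

text \<open>Letters x_i are represented by their indices i :: nat; words by nat lists.
  Elements of k<X> and of Sh(W) are both represented as coefficient functions
  on words (nat list => 'k); all elements used below have finite support.
  The quantum-variable data is the matrix p i j = chi^i(g_j).\<close>

type_synonym 'k lin = "nat list \<Rightarrow> 'k"

definition comono :: "nat list \<Rightarrow> 'k::field lin" where
  "comono u = (\<lambda>w. if w = u then 1 else 0)"

definition gen :: "nat \<Rightarrow> 'k::field lin" where
  "gen i = comono [i]"

definition lsmult :: "'k::field \<Rightarrow> 'k lin \<Rightarrow> 'k lin" where
  "lsmult c f = (\<lambda>w. c * f w)"

definition lminus :: "'k::field lin \<Rightarrow> 'k lin \<Rightarrow> 'k lin" where
  "lminus f g = (\<lambda>w. f w - g w)"

definition fmult :: "'k::field lin \<Rightarrow> 'k lin \<Rightarrow> 'k lin" where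
  "fmult f g = (\<lambda>w. \<Sum>i\<in>{0..length w}. f (take i w) * g (drop i w))"

definition pw :: "(nat \<Rightarrow> nat \<Rightarrow> 'k::field) \<Rightarrow> nat list \<Rightarrow> nat list \<Rightarrow> 'k" where
  "pw p u v = (\<Prod>a\<leftarrow>u. \<Prod>b\<leftarrow>v. p a b)"

text \<open>skew bracket [f,g] = fg - p(u,v) gf for f homogeneous of degree (the letters of) u
  and g homogeneous of degree v\<close>
definition skew_br :: "(nat \<Rightarrow> nat \<Rightarrow> 'k::field) \<Rightarrow> nat list \<Rightarrow> nat list \<Rightarrow> 'k lin \<Rightarrow> 'k lin \<Rightarrow> 'k lin" where
  "skew_br p u v f g = lminus (fmult f g) (lsmult (pw p u v) (fmult g f))"

text \<open>[x_1 x_2^m] = [...[[x_1,x_2],x_2],...,x_2]\<close>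
fun br_left :: "(nat \<Rightarrow> nat \<Rightarrow> 'k::field) \<Rightarrow> nat \<Rightarrow> 'k lin" where
  "br_left p 0 = gen 1"
| "br_left p (Suc k) = skew_br p (1 # replicate k 2) [2] (br_left p k) (gen 2)"

text \<open>[x_2^m x_1] = [x_2,[x_2,...,[x_2,x_1]...]]\<close>
fun br_right :: "(nat \<Rightarrow> nat \<Rightarrow> 'k::field) \<Rightarrow> nat \<Rightarrow> 'k lin" where
  "br_right p 0 = gen 1"
| "br_right p (Suc k) = skew_br p [2] (replicate k 2 @ [1]) (gen 2) (br_right p k)"

text \<open>quantum shuffle product: w is split into the subword on positions S
  (letters of the first factor) and on the complement (second factor); each pair with
  a letter b of the second factor placed before a letter a of the first factor
  contributes p(b,a)^{-1}.\<close>
definition shuffle :: "(nat \<Rightarrow> nat \<Rightarrow> 'k::field) \<Rightarrow> 'k lin \<Rightarrow> 'k lin \<Rightarrow> 'k lin" where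
  "shuffle p f g = (\<lambda>w. \<Sum>S\<in>Pow {0..<length w}.
      f (nths w S) * g (nths w ({0..<length w} - S)) *
      (\<Prod>(i, j)\<in>{(i, j). i \<in> S \<and> j \<in> {0..<length w} - S \<and> j < i}.
          inverse (p (w ! j) (w ! i))))"

fun Omega_word :: "(nat \<Rightarrow> nat \<Rightarrow> 'k::field) \<Rightarrow> nat list \<Rightarrow> 'k lin" where
  "Omega_word p [] = comono []"
| "Omega_word p (i # w) = shuffle p (comono [i]) (Omega_word p w)"

text \<open>linear extension (for finitely supported f this is the algebra homomorphism
  k<X> -> Sh(W) with x_i |-> (x_i))\<close>
definition Omega :: "(nat \<Rightarrow> nat \<Rightarrow> 'k::field) \<Rightarrow> 'k lin \<Rightarrow> 'k lin" where
  "Omega p f = (\<lambda>w'. \<Sum>w\<in>{w. f w \<noteq> 0}. f w * Omega_word p w w')"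

definition qint :: "'k::field \<Rightarrow> nat \<Rightarrow> 'k" where
  "qint q k = (\<Sum>i<k. q ^ i)"

definition qfact :: "'k::field \<Rightarrow> nat \<Rightarrow> 'k" where
  "qfact q m = (\<Prod>k=1..m. qint q k)"

end

theory Submission
  imports Defs
begin

text \<open>Right and left multiplication by a letter x_j are sent by \<Omega> to the operators
  F \<mapsto> F(x_j) and F \<mapsto> (x_j)F of Sh(W), which insert x_j into each word with weight
  p(x_j, suffix)^-1, resp. p(prefix, x_j)^-1. These operators commute (associativity of the
  quantum shuffle), so \<Omega> is multiplicative on letters, and
  \<Omega>([x_1 x_2^(k+1)]) = \<Omega>([x_1 x_2^k])(x_2) - p(x_1 x_2^k, x_2) (x_2)\<Omega>([x_1 x_2^k]).
  If \<Omega>([x_1 x_2^k]) = c_k (x_2^k x_1), the terms in (x_2^k x_1 x_2) cancel and (x_2^(k+1) x_1)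
  acquires the factor [k+1]_q q^-k p_21^-1 (1 - p_12 p_21 q^k). Hence
  c_m = [m]_q! \<Prod>_s (1 - p_12 p_21 q^s) p_21^-m q^(-m(m-1)/2), which vanishes exactly when one of
  the hypotheses fails; [x_2^m x_1] is symmetric.\<close>

section \<open>Removing a letter from a word\<close>

definition remove_nth :: "nat \<Rightarrow> 'a list \<Rightarrow> 'a list" where
  "remove_nth k v = take k v @ drop (Suc k) v"

lemma length_remove_nth: "k < length v \<Longrightarrow> length (remove_nth k v) = length v - 1"
  by (simp add: remove_nth_def)

lemma nth_remove_nth:
  "k < length v \<Longrightarrow> a < length v - 1 \<Longrightarrow>
     remove_nth k v ! a = (if a < k then v ! a else v ! Suc a)"
  by (auto simp add: remove_nth_def nth_append min_def)

lemma remove_nth_eq_nths: "remove_nth k w = nths w (- {k})"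
proof (induction w arbitrary: k)
  case Nil
  then show ?case by (simp add: remove_nth_def)
next
  case (Cons x w)
  then show ?case
  proof (cases k)
    case 0
    have "{j. Suc j \<in> - {0::nat}} = UNIV" by auto
    with 0 show ?thesis by (simp add: nths_Cons remove_nth_def nths_all)
  next
    case (Suc k')
    then have "{j. Suc j \<in> - {k}} = - {k'}" by auto
    with Suc Cons show ?thesis by (simp add: nths_Cons remove_nth_def)
  qed
qed

lemma remove_nth_eq_iff_insert:
  assumes "l < length v" and "length v = Suc (length e)"
  shows "v ! l = j \<and> remove_nth l v = e \<longleftrightarrow> v = take l e @ j # drop l e"
proof
  assume "v ! l = j \<and> remove_nth l v = e"
  moreover have "v = take l v @ v ! l # drop (Suc l) v"
    using assms(1) by (rule id_take_nth_drop)
  ultimately show "v = take l e @ j # drop l e"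
    using assms(1) by (auto simp: remove_nth_def)
next
  assume "v = take l e @ j # drop l e"
  then show "v ! l = j \<and> remove_nth l v = e"
    using assms by (simp add: remove_nth_def nth_append)
qed

text \<open>Position a of remove_nth k v is position skip k a of v; unskip k inverts skip k on
  the positions different from k.\<close>

definition skip :: "nat \<Rightarrow> nat \<Rightarrow> nat" where
  "skip k a = (if a < k then a else Suc a)"

definition unskip :: "nat \<Rightarrow> nat \<Rightarrow> nat" where
  "unskip k l = (if l < k then l else l - 1)"

lemma nth_remove_nth_skip: "k < length v \<Longrightarrow> a < length v - 1 \<Longrightarrow> remove_nth k v ! a = v ! skip k a"
  by (simp add: nth_remove_nth skip_def)

lemma nth_remove_nth_unskip:
  "l < length v \<Longrightarrow> l \<noteq> k \<Longrightarrow> remove_nth k v ! unskip k l = v ! l"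
  by (auto simp add: remove_nth_def nth_append min_def unskip_def)

lemma remove_nth_remove_nth_commute:
  assumes "k < length v" "l < length v" "l \<noteq> k"
  shows "remove_nth (unskip k l) (remove_nth k v) = remove_nth (unskip l k) (remove_nth l v)"
  using assms by (intro nth_equalityI) (auto simp add: nth_remove_nth length_remove_nth unskip_def)

lemma sum_remove_nth_positions:
  assumes "k < length v"
  shows "(\<Sum>a<length (remove_nth k v). g a) = (\<Sum>l\<in>{..<length v} - {k}. g (unskip k l))"
proof -
  have "bij_betw (unskip k) ({..<length v} - {k}) {..<length v - 1}"
    using assms by (intro bij_betw_byWitness[where f'="skip k"]) (auto simp: skip_def unskip_def)
  then show ?thesis
    using assms by (simp add: sum.reindex_bij_betw length_remove_nth)
qed

lemma prod_remove_nth_below: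
  assumes "k < length v" "l < length v" "l \<noteq> k"
  shows "(\<Prod>a<unskip k l. g (remove_nth k v ! a)) = (\<Prod>a\<in>{..<l} - {k}. g (v ! a))"
proof -
  have "bij_betw (skip k) {..<unskip k l} ({..<l} - {k})"
    using assms by (intro bij_betw_byWitness[where f'="unskip k"]) (auto simp: skip_def unskip_def)
  moreover have "(\<Prod>a<unskip k l. g (remove_nth k v ! a)) = (\<Prod>a<unskip k l. g (v ! skip k a))"
    using assms by (intro prod.cong refl arg_cong[where f=g] nth_remove_nth_skip) (auto simp: unskip_def split: if_splits)
  ultimately show ?thesis using prod.reindex_bij_betw[where g="\<lambda>a. g (v ! a)"] by simp
qed

lemma prod_remove_nth_above:
  assumes "k < length v" "l < length v" "l \<noteq> k"
  shows "(\<Prod>a\<in>{Suc (unskip k l)..<length (remove_nth k v)}. g (remove_nth k v ! a)) =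
         (\<Prod>a\<in>{Suc l..<length v} - {k}. g (v ! a))"
proof -
  have "bij_betw (skip k) {Suc (unskip k l)..<length v - 1} ({Suc l..<length v} - {k})"
    using assms by (intro bij_betw_byWitness[where f'="unskip k"]) (auto simp: skip_def unskip_def)
  moreover have "(\<Prod>a\<in>{Suc (unskip k l)..<length (remove_nth k v)}. g (remove_nth k v ! a)) =
      (\<Prod>a\<in>{Suc (unskip k l)..<length v - 1}. g (v ! skip k a))"
    using assms by (intro prod.cong) (auto simp: length_remove_nth nth_remove_nth_skip)
  ultimately show ?thesis using prod.reindex_bij_betw[where g="\<lambda>a. g (v ! a)"] by simp
qed

lemma nths_restrict: "nths w ({0..<length w} \<inter> A) = nths w A"
  unfolding nths_def by (rule arg_cong[where f="map fst"], rule filter_cong) (auto simp: set_zip)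

lemma nths_singleton_index: "k < length w \<Longrightarrow> nths w {k} = [w ! k]"
proof (induction w arbitrary: k)
  case (Cons x w)
  then show ?case by (cases k) (simp_all add: nths_Cons)
qed simp

section \<open>Inserting a letter: shuffling with a single letter\<close>

definition insertion :: "(nat list \<Rightarrow> nat \<Rightarrow> 'k::field) \<Rightarrow> nat \<Rightarrow> 'k lin \<Rightarrow> 'k lin" where
  "insertion wt i F =
     (\<lambda>v. \<Sum>k<length v. if v ! k = i then wt v k * F (remove_nth k v) else 0)"

text \<open>(x_i)F and F(x_j) in Sh(W). Only the first is matched with shuffle directly
  (shuffle_comono_singleton); the second is reached through Omega_word_snoc, which suffices.\<close>

definition shuffle_left :: "(nat \<Rightarrow> nat \<Rightarrow> 'k::field) \<Rightarrow> nat \<Rightarrow> 'k lin \<Rightarrow> 'k lin" where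
  "shuffle_left p i = insertion (\<lambda>v k. inverse (pw p (take k v) [i])) i"

definition shuffle_right :: "(nat \<Rightarrow> nat \<Rightarrow> 'k::field) \<Rightarrow> nat \<Rightarrow> 'k lin \<Rightarrow> 'k lin" where
  "shuffle_right p j = insertion (\<lambda>v k. inverse (pw p [j] (drop (Suc k) v))) j"

lemma insertion_cong:
  "(\<And>v k. k < length v \<Longrightarrow> wt v k = wt' v k) \<Longrightarrow> insertion wt i = insertion wt' i"
  unfolding insertion_def by (intro ext sum.cong refl) auto

lemma pw_take_singleton: "k \<le> length v \<Longrightarrow> pw p (take k v) [i] = (\<Prod>a<k. p (v ! a) i)"
  by (simp add: pw_def prod.list_conv_set_nth atLeast0LessThan min_def)

lemma pw_singleton_drop: "pw p [j] (drop k v) = (\<Prod>a\<in>{k..<length v}. p j (v ! a))"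
  by (simp add: pw_def prod.list_conv_set_nth prod.atLeastLessThan_shift_0[of _ k] add.commute)

lemma shuffle_left_nth: "shuffle_left p i = insertion (\<lambda>v k. inverse (\<Prod>a<k. p (v ! a) i)) i"
  unfolding shuffle_left_def by (rule insertion_cong) (simp add: pw_take_singleton)

lemma shuffle_right_nth:
  "shuffle_right p j = insertion (\<lambda>v k. inverse (\<Prod>a\<in>{Suc k..<length v}. p j (v ! a))) j"
  unfolding shuffle_right_def by (rule insertion_cong) (simp add: pw_singleton_drop)

lemma shuffle_comono_singleton: "shuffle p (comono [i]) F = shuffle_left p i F"
proof
  fix w :: "nat list"
  define n where "n = length w"
  define T where "T S = comono [i] (nths w S) * F (nths w ({0..<n} - S)) *
      (\<Prod>(a, b)\<in>{(a, b). a \<in> S \<and> b \<in> {0..<n} - S \<and> b < a}. inverse (p (w ! b) (w ! a)))"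
    for S
  have T_zero: "T S = 0" if "S \<in> Pow {0..<n} - (\<lambda>k. {k}) ` {0..<n}" for S
  proof -
    have "S \<subseteq> {0..<n}" "\<And>k. S \<noteq> {k}"
      using that by auto
    then have "card S \<noteq> 1"
      using card_1_singletonE by metis
    moreover have "{a. a < length w \<and> a \<in> S} = S"
      using \<open>S \<subseteq> {0..<n}\<close> by (auto simp: n_def)
    ultimately have "length (nths w S) \<noteq> 1"
      by (simp add: length_nths)
    then have "nths w S \<noteq> [i]"
      by auto
    then show ?thesis
      by (simp add: T_def comono_def)
  qed
  have T_single: "T {k} = (if w ! k = i then inverse (\<Prod>a<k. p (w ! a) i) * F (remove_nth k w) else 0)"
    if k: "k < n" for k
  proof -
    have "{(a, b). a \<in> {k} \<and> b \<in> {0..<n} - {k} \<and> b < a} = Pair k ` {..<k}"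
      using k by auto
    then have "(\<Prod>(a, b)\<in>{(a, b). a \<in> {k} \<and> b \<in> {0..<n} - {k} \<and> b < a}. inverse (p (w ! b) (w ! a)))
        = inverse (\<Prod>b<k. p (w ! b) (w ! k))"
      by (simp add: prod.reindex inj_on_def prod_inversef[symmetric] comp_def)
    moreover have "nths w ({0..<n} - {k}) = remove_nth k w"
      unfolding Diff_eq n_def nths_restrict remove_nth_eq_nths ..
    ultimately show ?thesis
      using k by (simp add: T_def comono_def nths_singleton_index n_def)
  qed
  have "shuffle p (comono [i]) F w = (\<Sum>S\<in>Pow {0..<n}. T S)"
    by (simp add: shuffle_def T_def n_def)
  also have "\<dots> = (\<Sum>S\<in>(\<lambda>k. {k}) ` {0..<n}. T S)"
    using T_zero by (intro sum.mono_neutral_right) auto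
  also have "\<dots> = (\<Sum>k<n. T {k})"
    by (subst sum.reindex) (auto simp: atLeast0LessThan)
  also have "\<dots> = shuffle_left p i F w"
    by (simp add: shuffle_left_nth insertion_def T_single n_def)
  finally show "shuffle p (comono [i]) F w = shuffle_left p i F w" .
qed

lemma insertion_insertion:
  "insertion wt i (insertion wt' j F) v =
     (\<Sum>k<length v. \<Sum>l\<in>{..<length v} - {k}.
        if v ! k = i \<and> v ! l = j
        then wt v k * wt' (remove_nth k v) (unskip k l) * F (remove_nth (unskip k l) (remove_nth k v))
        else 0)"
  unfolding insertion_def
proof (rule sum.cong)
  fix k assume "k \<in> {..<length v}"
  then have k: "k < length v" by simp
  have "wt v k * (\<Sum>l'<length (remove_nth k v). if remove_nth k v ! l' = j
          then wt' (remove_nth k v) l' * F (remove_nth l' (remove_nth k v)) else 0) =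
        (\<Sum>l\<in>{..<length v} - {k}. if v ! l = j
          then wt v k * wt' (remove_nth k v) (unskip k l) * F (remove_nth (unskip k l) (remove_nth k v))
          else 0)"
    using k by (simp add: sum_remove_nth_positions[OF k] sum_distrib_left)
      (rule sum.cong, auto simp: nth_remove_nth_unskip mult.assoc)
  then show "(if v ! k = i then wt v k * (\<Sum>l'<length (remove_nth k v). if remove_nth k v ! l' = j
          then wt' (remove_nth k v) l' * F (remove_nth l' (remove_nth k v)) else 0) else 0) =
        (\<Sum>l\<in>{..<length v} - {k}. if v ! k = i \<and> v ! l = j
          then wt v k * wt' (remove_nth k v) (unskip k l) * F (remove_nth (unskip k l) (remove_nth k v))
          else 0)"
    by simp
qed simp

text \<open>Inserting x_i at k and x_j at l in either order: the two letters cross, and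
  contribute p(x_j, x_i), on both sides exactly when l < k.\<close>

lemma crossing_weights_swap:
  fixes p :: "nat \<Rightarrow> nat \<Rightarrow> 'k::field"
  assumes "k < n" "l \<noteq> k" "v ! k = i" "v ! l = j"
  shows "inverse (\<Prod>a<k. p (v ! a) i) * inverse (\<Prod>a\<in>{Suc l..<n} - {k}. p j (v ! a)) =
         inverse (\<Prod>a\<in>{Suc l..<n}. p j (v ! a)) * inverse (\<Prod>a\<in>{..<k} - {l}. p (v ! a) i)"
proof (cases "l < k")
  case True
  have "(\<Prod>a<k. p (v ! a) i) = p j i * (\<Prod>a\<in>{..<k} - {l}. p (v ! a) i)"
    using prod.remove[of "{..<k}" l "\<lambda>a. p (v ! a) i"] True assms by simp
  moreover have "(\<Prod>a\<in>{Suc l..<n}. p j (v ! a)) = p j i * (\<Prod>a\<in>{Suc l..<n} - {k}. p j (v ! a))"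
    using prod.remove[of "{Suc l..<n}" k "\<lambda>a. p j (v ! a)"] True assms by simp
  ultimately show ?thesis
    by (simp add: inverse_mult_distrib mult_ac)
next
  case False
  then have "{..<k} - {l} = {..<k}" "{Suc l..<n} - {k} = {Suc l..<n}"
    using assms by auto
  then show ?thesis
    by simp
qed

lemma shuffle_left_right_commute:
  "shuffle_left p i (shuffle_right p j F) = shuffle_right p j (shuffle_left p i F)"
proof
  fix v :: "nat list"
  define n where "n = length v"
  define T where "T k l = (if v ! k = i \<and> v ! l = j
      then inverse (\<Prod>a<k. p (v ! a) i) * inverse (\<Prod>a\<in>{Suc l..<n} - {k}. p j (v ! a)) *
        F (remove_nth (unskip k l) (remove_nth k v))
      else 0)" for k l
  have "shuffle_left p i (shuffle_right p j F) v = (\<Sum>k<n. \<Sum>l\<in>{..<n} - {k}. T k l)"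
    unfolding shuffle_left_nth shuffle_right_nth insertion_insertion n_def
    by (intro sum.cong refl) (auto simp: T_def n_def prod_remove_nth_above)
  also have "\<dots> = (\<Sum>l<n. \<Sum>k\<in>{..<n} - {l}. T k l)"
    using sum.swap_restrict[of "{..<n}" "{..<n}" T "\<lambda>k l. k \<noteq> l"]
    by (simp add: set_diff_eq conj_commute eq_commute[of k l for k l])
  also have "\<dots> = shuffle_right p j (shuffle_left p i F) v"
    unfolding shuffle_left_nth shuffle_right_nth insertion_insertion n_def
  proof (intro sum.cong refl)
    fix l k assume "l \<in> {..<length v}" "k \<in> {..<length v} - {l}"
    then have kl: "k < length v" "l < length v" "k \<noteq> l"
      by auto
    show "T k l = (if v ! l = j \<and> v ! k = i
        then inverse (\<Prod>a\<in>{Suc l..<length v}. p j (v ! a)) *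
          inverse (\<Prod>a<unskip l k. p (remove_nth l v ! a) i) *
          F (remove_nth (unskip l k) (remove_nth l v))
        else 0)"
      using kl crossing_weights_swap[of k n l v i j p]
        prod_remove_nth_below[of l v k "\<lambda>x. p x i"]
      by (simp add: T_def n_def remove_nth_remove_nth_commute)
  qed
  finally show "shuffle_left p i (shuffle_right p j F) v = shuffle_right p j (shuffle_left p i F) v" .
qed

lemma insertion_sum:
  assumes "finite A"
  shows "insertion wt i (\<lambda>v. \<Sum>u\<in>A. c u * G u v) = (\<lambda>v. \<Sum>u\<in>A. c u * insertion wt i (G u) v)"
proof
  fix v :: "nat list"
  have "insertion wt i (\<lambda>v. \<Sum>u\<in>A. c u * G u v) v =
      (\<Sum>k<length v. \<Sum>u\<in>A. if v ! k = i then c u * (wt v k * G u (remove_nth k v)) else 0)"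
    unfolding insertion_def by (rule sum.cong) (auto simp: sum_distrib_left mult_ac)
  also have "\<dots> = (\<Sum>u\<in>A. c u * insertion wt i (G u) v)"
    unfolding insertion_def by (subst sum.swap) (auto simp: sum_distrib_left intro!: sum.cong)
  finally show "insertion wt i (\<lambda>v. \<Sum>u\<in>A. c u * G u v) v = (\<Sum>u\<in>A. c u * insertion wt i (G u) v)" .
qed

lemma insertion_lsmult: "insertion wt i (lsmult c F) = lsmult c (insertion wt i F)"
  unfolding insertion_def lsmult_def
  by (rule ext) (simp add: sum_distrib_left, rule sum.cong, simp_all add: mult_ac)

lemma insertion_comono:
  "insertion wt i (comono e) =
     (\<lambda>v. \<Sum>l\<le>length e. if v = take l e @ i # drop l e then wt v l else 0)"
proof
  fix v :: "nat list"
  show "insertion wt i (comono e) v =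
      (\<Sum>l\<le>length e. if v = take l e @ i # drop l e then wt v l else 0)"
  proof (cases "length v = Suc (length e)")
    case True
    show ?thesis
      unfolding insertion_def True lessThan_Suc_atMost
    proof (intro sum.cong refl)
      fix l assume "l \<in> {..length e}"
      then have "l < length v"
        using True by simp
      then show "(if v ! l = i then wt v l * comono e (remove_nth l v) else 0) =
          (if v = take l e @ i # drop l e then wt v l else 0)"
        using remove_nth_eq_iff_insert[of l v e i] True by (auto simp: comono_def)
    qed
  next
    case False
    then have "remove_nth l v \<noteq> e" if "l < length v" for l
      using that by (auto simp: remove_nth_def)
    moreover have "v \<noteq> take l e @ i # drop l e" if "l \<le> length e" for l
      using False that by auto
    ultimately show ?thesis
      by (auto simp: insertion_def comono_def intro!: sum.neutral)
  qed
qed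

lemma insertion_comono_Nil: "insertion wt i (comono []) = lsmult (wt [i] 0) (comono [i])"
  unfolding insertion_comono by (auto simp: lsmult_def comono_def)

lemma Omega_word_snoc: "Omega_word p (w @ [j]) = shuffle_right p j (Omega_word p w)"
proof (induction w)
  case Nil
  show ?case
    by (simp add: shuffle_comono_singleton shuffle_left_def shuffle_right_def insertion_comono_Nil
        lsmult_def pw_def)
next
  case (Cons i w)
  then show ?case
    by (simp add: shuffle_comono_singleton shuffle_left_right_commute)
qed

section \<open>\<Omega> on products with a letter\<close>

text \<open>Omega sums over the support, so it is linear only on finitely supported elements.\<close>

definition finite_supp :: "'k::field lin \<Rightarrow> bool" where
  "finite_supp f \<longleftrightarrow> finite {w. f w \<noteq> 0}"

lemma fmult_gen_right:
  "fmult f (gen j) = (\<lambda>w. if w \<noteq> [] \<and> last w = j then f (butlast w) else 0)"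
proof
  fix w :: "nat list"
  have drop_eq: "drop i w = [j] \<longleftrightarrow> w \<noteq> [] \<and> last w = j \<and> i = length w - 1" if "i \<le> length w" for i
  proof
    assume d: "drop i w = [j]"
    then have "i = length w - 1" "w \<noteq> []"
      by (auto dest: arg_cong[where f=length])
    then show "w \<noteq> [] \<and> last w = j \<and> i = length w - 1"
      using d by (cases w rule: rev_cases) auto
  next
    assume "w \<noteq> [] \<and> last w = j \<and> i = length w - 1"
    then show "drop i w = [j]"
      by (cases w rule: rev_cases) auto
  qed
  have "fmult f (gen j) w = (\<Sum>i\<in>{0..length w}.
      if i = length w - 1 then (if w \<noteq> [] \<and> last w = j then f (butlast w) else 0) else 0)"
    unfolding fmult_def gen_def comono_def by (rule sum.cong) (auto simp: drop_eq butlast_conv_take)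
  then show "fmult f (gen j) w = (if w \<noteq> [] \<and> last w = j then f (butlast w) else 0)"
    by simp
qed

lemma fmult_gen_left: "fmult (gen j) f = (\<lambda>w. if w \<noteq> [] \<and> hd w = j then f (tl w) else 0)"
proof
  fix w :: "nat list"
  have take_eq: "take i w = [j] \<longleftrightarrow> w \<noteq> [] \<and> hd w = j \<and> i = 1" if "i \<le> length w" for i
    using that by (cases w; cases i) auto
  have "fmult (gen j) f w = (\<Sum>i\<in>{0..length w}.
      if i = 1 then (if w \<noteq> [] \<and> hd w = j then f (tl w) else 0) else 0)"
    unfolding fmult_def gen_def comono_def by (rule sum.cong) (auto simp: take_eq drop_Suc)
  then show "fmult (gen j) f w = (if w \<noteq> [] \<and> hd w = j then f (tl w) else 0)"
    by (cases w) (auto simp: Suc_le_eq)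
qed

lemma supp_fmult_gen_right: "{w. fmult f (gen j) w \<noteq> 0} = (\<lambda>u. u @ [j]) ` {w. f w \<noteq> 0}"
  by (force simp: fmult_gen_right intro: image_eqI[where x="butlast _"])

lemma supp_fmult_gen_left: "{w. fmult (gen j) f w \<noteq> 0} = (\<lambda>u. j # u) ` {w. f w \<noteq> 0}"
  by (force simp: fmult_gen_left intro: image_eqI[where x="tl _"])

lemma finite_supp_gen: "finite_supp (gen j)"
  unfolding finite_supp_def gen_def comono_def by simp

lemma finite_supp_lsmult: "finite_supp f \<Longrightarrow> finite_supp (lsmult c f)"
  unfolding finite_supp_def lsmult_def by (rule finite_subset[rotated]) auto

lemma finite_supp_lminus: "finite_supp f \<Longrightarrow> finite_supp g \<Longrightarrow> finite_supp (lminus f g)"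
  unfolding finite_supp_def lminus_def
  by (rule finite_subset[of _ "{w. f w \<noteq> 0} \<union> {w. g w \<noteq> 0}"]) auto

lemma finite_supp_fmult_gen_right: "finite_supp f \<Longrightarrow> finite_supp (fmult f (gen j))"
  unfolding finite_supp_def supp_fmult_gen_right by simp

lemma finite_supp_fmult_gen_left: "finite_supp f \<Longrightarrow> finite_supp (fmult (gen j) f)"
  unfolding finite_supp_def supp_fmult_gen_left by simp

lemma finite_supp_skew_br:
  "finite_supp f \<Longrightarrow> finite_supp (skew_br p u v f (gen j))"
  "finite_supp f \<Longrightarrow> finite_supp (skew_br p u v (gen j) f)"
  by (simp_all add: skew_br_def finite_supp_lminus finite_supp_lsmult
      finite_supp_fmult_gen_right finite_supp_fmult_gen_left)

lemma Omega_eq_sum: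
  "finite A \<Longrightarrow> {w. f w \<noteq> 0} \<subseteq> A \<Longrightarrow> Omega p f = (\<lambda>v. \<Sum>w\<in>A. f w * Omega_word p w v)"
  unfolding Omega_def by (rule ext, rule sum.mono_neutral_left) auto

lemma Omega_gen: "Omega p (gen i) = comono [i]"
proof -
  have "Omega p (gen i) = Omega_word p [i]"
    by (subst Omega_eq_sum[of "{[i]}"]) (auto simp: gen_def comono_def)
  then show ?thesis
    by (simp add: shuffle_comono_singleton shuffle_left_def insertion_comono_Nil lsmult_def pw_def)
qed

lemma Omega_lsmult:
  assumes "finite_supp f"
  shows "Omega p (lsmult c f) = lsmult c (Omega p f)"
proof -
  define A where "A = {w. f w \<noteq> 0}"
  have A: "finite A"
    using assms by (simp add: finite_supp_def A_def)
  have "Omega p (lsmult c f) = (\<lambda>v. \<Sum>w\<in>A. lsmult c f w * Omega_word p w v)"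
    using A by (rule Omega_eq_sum) (auto simp: A_def lsmult_def)
  moreover have "Omega p f = (\<lambda>v. \<Sum>w\<in>A. f w * Omega_word p w v)"
    using A by (rule Omega_eq_sum) (simp add: A_def)
  ultimately show ?thesis
    by (simp add: lsmult_def sum_distrib_left mult_ac)
qed

lemma Omega_lminus:
  assumes "finite_supp f" "finite_supp g"
  shows "Omega p (lminus f g) = lminus (Omega p f) (Omega p g)"
proof -
  define A where "A = {w. f w \<noteq> 0} \<union> {w. g w \<noteq> 0}"
  have A: "finite A"
    using assms by (simp add: finite_supp_def A_def)
  have "Omega p (lminus f g) = (\<lambda>v. \<Sum>w\<in>A. lminus f g w * Omega_word p w v)"
    using A by (rule Omega_eq_sum) (auto simp: A_def lminus_def)
  moreover have "Omega p f = (\<lambda>v. \<Sum>w\<in>A. f w * Omega_word p w v)"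
    using A by (rule Omega_eq_sum) (auto simp: A_def)
  moreover have "Omega p g = (\<lambda>v. \<Sum>w\<in>A. g w * Omega_word p w v)"
    using A by (rule Omega_eq_sum) (auto simp: A_def)
  ultimately show ?thesis
    by (simp add: lminus_def sum_subtractf left_diff_distrib)
qed

lemma Omega_fmult_gen_right:
  assumes "finite_supp f"
  shows "Omega p (fmult f (gen j)) = shuffle_right p j (Omega p f)"
proof -
  define A where "A = {w. f w \<noteq> 0}"
  have A: "finite A"
    using assms by (simp add: finite_supp_def A_def)
  have "Omega p (fmult f (gen j)) = (\<lambda>v. \<Sum>w\<in>(\<lambda>u. u @ [j]) ` A. fmult f (gen j) w * Omega_word p w v)"
    using A by (intro Omega_eq_sum) (auto simp: A_def supp_fmult_gen_right)
  also have "\<dots> = (\<lambda>v. \<Sum>u\<in>A. f u * shuffle_right p j (Omega_word p u) v)"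
    by (rule ext, subst sum.reindex) (auto simp: inj_on_def fmult_gen_right Omega_word_snoc)
  also have "\<dots> = shuffle_right p j (Omega p f)"
    using A by (simp add: shuffle_right_def insertion_sum Omega_eq_sum[of A] A_def)
  finally show ?thesis .
qed

lemma Omega_fmult_gen_left:
  assumes "finite_supp f"
  shows "Omega p (fmult (gen j) f) = shuffle_left p j (Omega p f)"
proof -
  define A where "A = {w. f w \<noteq> 0}"
  have A: "finite A"
    using assms by (simp add: finite_supp_def A_def)
  have "Omega p (fmult (gen j) f) = (\<lambda>v. \<Sum>w\<in>(\<lambda>u. j # u) ` A. fmult (gen j) f w * Omega_word p w v)"
    using A by (intro Omega_eq_sum) (auto simp: A_def supp_fmult_gen_left)
  also have "\<dots> = (\<lambda>v. \<Sum>u\<in>A. f u * shuffle_left p j (Omega_word p u) v)"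
    by (rule ext, subst sum.reindex) (auto simp: inj_on_def fmult_gen_left shuffle_comono_singleton)
  also have "\<dots> = shuffle_left p j (Omega p f)"
    using A by (simp add: shuffle_left_def insertion_sum Omega_eq_sum[of A] A_def)
  finally show ?thesis .
qed

section \<open>The brackets [x_1 x_2^m] and [x_2^m x_1]\<close>

lemma replicate_insert: "l \<le> k \<Longrightarrow> replicate l a @ a # replicate (k - l) a = replicate (Suc k) a"
proof -
  assume "l \<le> k"
  then have "Suc k = l + Suc (k - l)"
    by simp
  then show ?thesis
    by (simp only: replicate_add) simp
qed

lemma insertion_comono_replicate_snoc:
  "insertion wt a (comono (replicate k a @ [b])) = (\<lambda>v.
     (if v = replicate (Suc k) a @ [b] then \<Sum>l\<le>k. wt v l else 0) +
     (if v = replicate k a @ [b, a] then wt v (Suc k) else 0))"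
proof
  fix v :: "nat list"
  let ?e = "replicate k a @ [b]"
  have "(\<Sum>l\<le>k. if v = take l ?e @ a # drop l ?e then wt v l else 0) =
      (\<Sum>l\<le>k. if v = replicate (Suc k) a @ [b] then wt v l else 0)"
    by (intro sum.cong refl) (simp add: replicate_insert del: replicate_Suc)
  then show "insertion wt a (comono ?e) v =
     (if v = replicate (Suc k) a @ [b] then \<Sum>l\<le>k. wt v l else 0) +
     (if v = replicate k a @ [b, a] then wt v (Suc k) else 0)"
    by (simp add: insertion_comono sum.atMost_Suc del: replicate_Suc)
qed

lemma insertion_comono_Cons_replicate:
  "insertion wt a (comono (b # replicate k a)) = (\<lambda>v.
     (if v = a # b # replicate k a then wt v 0 else 0) +
     (if v = b # replicate (Suc k) a then \<Sum>l\<le>k. wt v (Suc l) else 0))"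
proof
  fix v :: "nat list"
  let ?e = "b # replicate k a"
  have "(\<Sum>l\<le>k. if v = take (Suc l) ?e @ a # drop (Suc l) ?e then wt v (Suc l) else 0) =
      (\<Sum>l\<le>k. if v = b # replicate (Suc k) a then wt v (Suc l) else 0)"
    by (intro sum.cong refl) (simp add: replicate_insert del: replicate_Suc)
  then show "insertion wt a (comono ?e) v =
     (if v = a # b # replicate k a then wt v 0 else 0) +
     (if v = b # replicate (Suc k) a then \<Sum>l\<le>k. wt v (Suc l) else 0)"
    unfolding insertion_comono length_Cons length_replicate sum.atMost_Suc_shift by simp
qed

lemma shuffle_right_x2_pow_x1:
  "shuffle_right p 2 (comono (replicate k 2 @ [1])) = (\<lambda>v.
     (if v = replicate (Suc k) 2 @ [1] then inverse (p 2 1) * (\<Sum>l\<le>k. inverse (p 2 2 ^ (k - l))) else 0) +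
     (if v = replicate k 2 @ [1, 2] then 1 else 0))"
  unfolding shuffle_right_def insertion_comono_replicate_snoc
  by (intro ext)
    (auto simp: pw_def min_def sum_distrib_left inverse_mult_distrib mult.commute
      simp del: replicate_Suc intro!: sum.cong)

lemma shuffle_left_x2_pow_x1:
  "shuffle_left p 2 (comono (replicate k 2 @ [1])) = (\<lambda>v.
     (if v = replicate (Suc k) 2 @ [1] then \<Sum>l\<le>k. inverse (p 2 2 ^ l) else 0) +
     (if v = replicate k 2 @ [1, 2] then inverse (p 2 2 ^ k * p 1 2) else 0))"
  unfolding shuffle_left_def insertion_comono_replicate_snoc
  by (intro ext)
    (auto simp: pw_def min_def sum_distrib_left inverse_mult_distrib mult.commute
      simp del: replicate_Suc intro!: sum.cong)

lemma shuffle_right_x1_x2_pow: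
  "shuffle_right p 2 (comono (1 # replicate k 2)) = (\<lambda>v.
     (if v = 2 # 1 # replicate k 2 then inverse (p 2 1 * p 2 2 ^ k) else 0) +
     (if v = 1 # replicate (Suc k) 2 then \<Sum>l\<le>k. inverse (p 2 2 ^ (k - l)) else 0))"
  unfolding shuffle_right_def insertion_comono_Cons_replicate
  by (intro ext)
    (auto simp: pw_def min_def sum_distrib_left inverse_mult_distrib mult.commute
      simp del: replicate_Suc intro!: sum.cong)

lemma shuffle_left_x1_x2_pow:
  "shuffle_left p 2 (comono (1 # replicate k 2)) = (\<lambda>v.
     (if v = 2 # 1 # replicate k 2 then 1 else 0) +
     (if v = 1 # replicate (Suc k) 2 then inverse (p 1 2) * (\<Sum>l\<le>k. inverse (p 2 2 ^ l)) else 0))"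
  unfolding shuffle_left_def insertion_comono_Cons_replicate
  by (intro ext)
    (auto simp: pw_def min_def sum_distrib_left inverse_mult_distrib mult.commute
      simp del: replicate_Suc intro!: sum.cong)

lemma sum_inverse_power_eq_qint:
  fixes q :: "'k::field"
  assumes "q \<noteq> 0"
  shows "(\<Sum>l\<le>k. inverse (q ^ l)) = inverse (q ^ k) * qint q (Suc k)"
proof (induction k)
  case 0
  then show ?case by (simp add: qint_def)
next
  case (Suc k)
  have "qint q (Suc (Suc k)) = 1 + q * qint q (Suc k)"
    unfolding qint_def
    by (simp only: sum.lessThan_Suc_shift[of _ "Suc k"]) (simp add: sum_distrib_left del: sum.lessThan_Suc)
  then show ?case
    using Suc assms by (simp add: field_simps)
qed

lemma sum_inverse_power_diff_eq_qint:
  fixes q :: "'k::field"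
  assumes "q \<noteq> 0"
  shows "(\<Sum>l\<le>k. inverse (q ^ (k - l))) = inverse (q ^ k) * qint q (Suc k)"
  using sum.atLeastAtMost_rev[of "\<lambda>l. inverse (q ^ l)" 0 k] sum_inverse_power_eq_qint[OF assms]
  by (simp add: atLeast0AtMost)

definition br_denom :: "(nat \<Rightarrow> nat \<Rightarrow> 'k::field) \<Rightarrow> nat \<Rightarrow> 'k" where
  "br_denom p m = qfact (p 2 2) m * (\<Prod>s<m. 1 - p 1 2 * p 2 1 * p 2 2 ^ s)"

lemma br_denom_Suc:
  "br_denom p (Suc k) = br_denom p k * qint (p 2 2) (Suc k) * (1 - p 1 2 * p 2 1 * p 2 2 ^ k)"
  by (simp add: br_denom_def qfact_def mult_ac)

lemma br_denom_nonzero_iff: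
  assumes "p 2 2 \<noteq> 0"
  shows "br_denom p m \<noteq> 0 \<longleftrightarrow>
    (\<forall>k\<in>{1..m}. qint (p 2 2) k \<noteq> 0 \<and> p 1 2 * p 2 1 \<noteq> inverse (p 2 2 ^ (k - 1)))"
proof -
  have factor: "1 - p 1 2 * p 2 1 * p 2 2 ^ s = 0 \<longleftrightarrow> p 1 2 * p 2 1 = inverse (p 2 2 ^ s)" for s
    using assms by (auto simp: field_simps)
  have "{1..m} = Suc ` {..<m}"
    by (simp add: lessThan_atLeast0 image_Suc_atLeastLessThan atLeastLessThanSuc_atLeastAtMost)
  then have "(\<forall>s\<in>{..<m}. p 1 2 * p 2 1 \<noteq> inverse (p 2 2 ^ s)) \<longleftrightarrow>
      (\<forall>k\<in>{1..m}. p 1 2 * p 2 1 \<noteq> inverse (p 2 2 ^ (k - 1)))"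
    by simp
  moreover have "br_denom p m \<noteq> 0 \<longleftrightarrow>
      (\<forall>k\<in>{1..m}. qint (p 2 2) k \<noteq> 0) \<and> (\<forall>s\<in>{..<m}. 1 - p 1 2 * p 2 1 * p 2 2 ^ s \<noteq> 0)"
    by (simp add: br_denom_def qfact_def prod_zero_iff lessThan_iff)
  ultimately show ?thesis
    by (simp only: factor ball_conj_distrib)
qed

lemma Omega_skew_br_gen_right:
  "finite_supp f \<Longrightarrow> Omega p (skew_br p u v f (gen j)) =
     lminus (shuffle_right p j (Omega p f)) (lsmult (pw p u v) (shuffle_left p j (Omega p f)))"
  by (simp add: skew_br_def Omega_lminus Omega_lsmult finite_supp_lsmult finite_supp_fmult_gen_right
      finite_supp_fmult_gen_left Omega_fmult_gen_right Omega_fmult_gen_left)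

lemma Omega_skew_br_gen_left:
  "finite_supp f \<Longrightarrow> Omega p (skew_br p u v (gen j) f) =
     lminus (shuffle_left p j (Omega p f)) (lsmult (pw p u v) (shuffle_right p j (Omega p f)))"
  by (simp add: skew_br_def Omega_lminus Omega_lsmult finite_supp_lsmult finite_supp_fmult_gen_right
      finite_supp_fmult_gen_left Omega_fmult_gen_right Omega_fmult_gen_left)

lemma shuffle_left_lsmult: "shuffle_left p i (lsmult c F) = lsmult c (shuffle_left p i F)"
  by (simp add: shuffle_left_def insertion_lsmult)

lemma shuffle_right_lsmult: "shuffle_right p j (lsmult c F) = lsmult c (shuffle_right p j F)"
  by (simp add: shuffle_right_def insertion_lsmult)

lemma finite_supp_br_left: "finite_supp (br_left p k)"
  by (induction k) (simp_all add: finite_supp_gen finite_supp_skew_br)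

lemma finite_supp_br_right: "finite_supp (br_right p k)"
  by (induction k) (simp_all add: finite_supp_gen finite_supp_skew_br)

lemma Suc_triangle: "Suc k * (Suc k - 1) div 2 = k * (k - 1) div 2 + k"
proof -
  have "Suc k * (Suc k - 1) = k * (k - 1) + 2 * k"
    by (cases k) (simp_all add: algebra_simps)
  then show ?thesis
    by simp
qed

lemma Omega_br_left:
  assumes "p 1 2 \<noteq> 0" "p 2 1 \<noteq> 0" "p 2 2 \<noteq> 0"
  shows "Omega p (br_left p m) =
    lsmult (br_denom p m * inverse (p 2 1 ^ m * p 2 2 ^ (m * (m - 1) div 2)))
      (comono (replicate m 2 @ [1]))"
proof (induction m)
  case 0
  then show ?case
    by (simp add: Omega_gen br_denom_def qfact_def lsmult_def)
next
  case (Suc k)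
  let ?c = "br_denom p k * inverse (p 2 1 ^ k * p 2 2 ^ (k * (k - 1) div 2))"
  have "last (replicate (Suc k) (2::nat) @ [1]) \<noteq> last (replicate k 2 @ [1, 2])"
    by simp
  then have words_differ: "replicate (Suc k) (2::nat) @ [1] \<noteq> replicate k 2 @ [1, 2]"
    by metis
  have "Omega p (br_left p (Suc k)) =
      lminus (lsmult ?c (shuffle_right p 2 (comono (replicate k 2 @ [1]))))
        (lsmult (p 1 2 * p 2 2 ^ k) (lsmult ?c (shuffle_left p 2 (comono (replicate k 2 @ [1])))))"
    by (simp add: Omega_skew_br_gen_right finite_supp_br_left Suc.IH shuffle_left_lsmult
        shuffle_right_lsmult pw_def)
  \<comment> \<open>the two contributions to (x_2^k x_1 x_2) cancel\<close>
  also have "\<dots> = lsmult (br_denom p (Suc k) * inverse (p 2 1 ^ Suc k * p 2 2 ^ (Suc k * (Suc k - 1) div 2)))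
      (comono (replicate (Suc k) 2 @ [1]))"
    unfolding shuffle_right_x2_pow_x1 shuffle_left_x2_pow_x1
    unfolding lminus_def lsmult_def comono_def br_denom_Suc Suc_triangle
      sum_inverse_power_eq_qint[OF assms(3)] sum_inverse_power_diff_eq_qint[OF assms(3)]
    using assms words_differ by (intro ext) (auto simp: field_simps power_add simp del: replicate_Suc)
  finally show ?case .
qed

lemma Omega_br_right:
  assumes "p 1 2 \<noteq> 0" "p 2 1 \<noteq> 0" "p 2 2 \<noteq> 0"
  shows "Omega p (br_right p m) =
    lsmult (br_denom p m * inverse (p 1 2 ^ m * p 2 2 ^ (m * (m - 1) div 2)))
      (comono (1 # replicate m 2))"
proof (induction m)
  case 0
  then show ?case
    by (simp add: Omega_gen br_denom_def qfact_def lsmult_def)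
next
  case (Suc k)
  let ?c = "br_denom p k * inverse (p 1 2 ^ k * p 2 2 ^ (k * (k - 1) div 2))"
  have "Omega p (br_right p (Suc k)) =
      lminus (lsmult ?c (shuffle_left p 2 (comono (1 # replicate k 2))))
        (lsmult (p 2 1 * p 2 2 ^ k) (lsmult ?c (shuffle_right p 2 (comono (1 # replicate k 2)))))"
    by (simp add: Omega_skew_br_gen_left finite_supp_br_right Suc.IH shuffle_left_lsmult
        shuffle_right_lsmult pw_def mult.commute)
  also have "\<dots> = lsmult (br_denom p (Suc k) * inverse (p 1 2 ^ Suc k * p 2 2 ^ (Suc k * (Suc k - 1) div 2)))
      (comono (1 # replicate (Suc k) 2))"
    unfolding shuffle_right_x1_x2_pow shuffle_left_x1_x2_pow
    unfolding lminus_def lsmult_def comono_def br_denom_Suc Suc_triangle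
      sum_inverse_power_eq_qint[OF assms(3)] sum_inverse_power_diff_eq_qint[OF assms(3)]
    using assms by (intro ext) (auto simp: field_simps power_add simp del: replicate_Suc)
  finally show ?case .
qed

theorem lemma3p2:
  fixes p :: "nat \<Rightarrow> nat \<Rightarrow> 'k::field" and n m :: nat
  assumes "n \<ge> 2"
    and "\<forall>i\<in>{1..n}. \<forall>j\<in>{1..n}. p i j \<noteq> 0"
  defines "q \<equiv> p 2 2"
  defines "c \<equiv> inverse (qfact q m * (\<Prod>s<m. 1 - p 1 2 * p 2 1 * q ^ s))"
  shows "((\<forall>k\<in>{1..m}. qint q k \<noteq> 0 \<and> p 1 2 * p 2 1 \<noteq> inverse (q ^ (k - 1))) \<longrightarrow>
           Omega p (lsmult c (br_left p m)) =
             lsmult (inverse (p 2 1 ^ m) * inverse (q ^ (m * (m - 1) div 2)))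
               (comono (replicate m 2 @ [1])) \<and>
           Omega p (lsmult c (br_right p m)) =
             lsmult (inverse (p 1 2 ^ m) * inverse (q ^ (m * (m - 1) div 2)))
               (comono (1 # replicate m 2)))
       \<and> (\<not> (\<forall>k\<in>{1..m}. qint q k \<noteq> 0 \<and> p 1 2 * p 2 1 \<noteq> inverse (q ^ (k - 1))) \<longrightarrow>
           Omega p (br_left p m) = (\<lambda>w. 0) \<and> Omega p (br_right p m) = (\<lambda>w. 0))"
  proof -
  have nonzero: "p 1 2 \<noteq> 0" "p 2 1 \<noteq> 0" "p 2 2 \<noteq> 0"
    using assms(1,2) by auto
  have c: "c = inverse (br_denom p m)"
    by (simp add: c_def q_def br_denom_def)
  have condition: "(\<forall>k\<in>{1..m}. qint q k \<noteq> 0 \<and> p 1 2 * p 2 1 \<noteq> inverse (q ^ (k - 1))) \<longleftrightarrow>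
      br_denom p m \<noteq> 0"
    using br_denom_nonzero_iff[of p m] nonzero(3) by (simp add: q_def)
  show ?thesis
    unfolding condition c Omega_lsmult[OF finite_supp_br_left] Omega_lsmult[OF finite_supp_br_right]
      Omega_br_left[OF nonzero] Omega_br_right[OF nonzero]
    by (auto simp: lsmult_def q_def field_simps)
qed

end
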